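(* Let $p>2$ be real with $2n\le p\le 2n+1$ for some $n\in\mathbb{N}$, and let $u(x)=e^{ix^p}$, $x\in\mathbb{R}$, where for $x<0$ we set $x^p=e^{i\pi p}|x|^p$ (so $u\in\mathscr{S}'(\mathbb{R})$). Then $$WF(u)\subseteq\{0\}\times(\mathbb{R}\setminus\{0\}).$$
   Context: $WF$ is the Gabor wave front set: for $u\in\mathscr{S}'(\mathbb{R})$, $z_0\in T^*\mathbb{R}\setminus\{0\}$ is not in $WF(u)$ iff there is an open conic set $\Gamma\ni z_0$ with $\sup_{z\in\Gamma}\langle z\rangle^N|V_\varphi u(z)|<\infty$ for all $N\ge0$, where $V_\varphi u(x,\xi)=\int u(y)\overline{\varphi(y-x)}e^{-iy\xi}dy$, $\varphi\in\mathscr{S}(\mathbb{R})\setminus\{0\}$, $\langle z\rangle=(1+|z|^2)^{1/2}$. *)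

theory Defs
  imports "HOL-Analysis.Analysis"
begin

definition schwartz :: "(real \<Rightarrow> complex) \<Rightarrow> bool" where
  "schwartz phi \<longleftrightarrow> (\<exists>D :: nat \<Rightarrow> real \<Rightarrow> complex.
      D 0 = phi \<and>
      (\<forall>k x. (D k has_vector_derivative D (Suc k) x) (at x)) \<and>
      (\<forall>k m. \<exists>C. \<forall>x. \<bar>x\<bar> ^ m * norm (D k x) \<le> C))"

definition jbr :: "real \<times> real \<Rightarrow> real" where
  "jbr z = sqrt (1 + (norm z)\<^sup>2)"

definition stft :: "(real \<Rightarrow> complex) \<Rightarrow> (real \<Rightarrow> complex) \<Rightarrow> real \<times> real \<Rightarrow> complex" where
  "stft phi u z = (LINT y|lborel. u y * cnj (phi (y - fst z)) * exp (- \<i> * complex_of_real (y * snd z)))"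

definition open_conic :: "(real \<times> real) set \<Rightarrow> bool" where
  "open_conic G \<longleftrightarrow> open G \<and> 0 \<notin> G \<and> (\<forall>z\<in>G. \<forall>t>0. t *\<^sub>R z \<in> G)"

definition gabor_WF :: "(real \<Rightarrow> complex) \<Rightarrow> (real \<Rightarrow> complex) \<Rightarrow> (real \<times> real) set" where
  "gabor_WF phi u = {z0. z0 \<noteq> 0 \<and> \<not> (\<exists>G. open_conic G \<and> z0 \<in> G \<and>
      (\<forall>N::real. N \<ge> 0 \<longrightarrow> (\<exists>C. \<forall>z\<in>G. jbr z powr N * norm (stft phi u z) \<le> C)))}"

definition cpow :: "real \<Rightarrow> real \<Rightarrow> complex" where
  "cpow p x = (if x \<ge> 0 then complex_of_real (x powr p)
               else exp (\<i> * complex_of_real (pi * p)) * complex_of_real (\<bar>x\<bar> powr p))"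

definition chirp :: "real \<Rightarrow> real \<Rightarrow> complex" where
  "chirp p x = exp (\<i> * cpow p x)"

end

theory Submission
  imports Defs "HOL-Probability.Sinc_Integral"
begin

text \<open>Fix a direction \<open>(x\<^sub>0, \<xi>\<^sub>0)\<close> with \<open>x\<^sub>0 \<noteq> 0\<close> and the open cone \<open>s x > 0, \<bar>\<xi>\<bar> < A s x\<close>
  around it, \<open>s = sgn x\<^sub>0\<close>. After the substitution \<open>y = t + x\<close> in the STFT, split the integral
  at \<open>\<bar>t\<bar> = \<bar>x\<bar>/2\<close>. On the inner part the phase \<open>\<gamma> \<bar>y\<bar>\<^sup>p - y \<xi>\<close> has derivative of modulus
  at least \<open>\<bar>x\<bar>\<close> once \<open>\<bar>x\<bar>\<close> is large, because \<open>p > 2\<close> makes the chirp frequency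
  \<open>p \<bar>y\<bar>\<^sup>p\<^sup>-\<^sup>1\<close> dominate \<open>\<bar>\<xi>\<bar> \<le> A \<bar>x\<bar>\<close>; repeated integration by parts then gives
  \<open>O(\<bar>x\<bar>\<^sup>-\<^sup>N)\<close>. The outer part is \<open>O(\<bar>x\<bar>\<^sup>-\<^sup>N)\<close> by the decay of the window. As \<open>\<langle>z\<rangle> \<sim> \<bar>x\<bar>\<close>
  on the cone, the STFT decays rapidly there, so no such direction lies in the wave front set.
  The condition \<open>2n \<le> p \<le> 2n + 1\<close> means \<open>sin (\<pi> p) \<ge> 0\<close>, which keeps \<open>\<bar>u\<bar> \<le> 1\<close> on \<open>x < 0\<close>.\<close>

text \<open>The bound is imposed on \<open>\<bar>t\<bar> < 3/4 \<rho>(w)\<close>, an open neighbourhood of the interval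
  \<open>[-\<rho>(w)/2, \<rho>(w)/2]\<close> of integration, so that derivatives exist at its endpoints.\<close>

definition weighted_bound ::
    "'w set \<Rightarrow> ('w \<Rightarrow> real) \<Rightarrow> nat \<Rightarrow> nat \<Rightarrow> ('w \<Rightarrow> real \<Rightarrow> complex) \<Rightarrow> bool" where
  "weighted_bound W \<rho> k m f \<longleftrightarrow> (\<exists>C. \<forall>w\<in>W. \<forall>t. \<bar>t\<bar> < 3/4 * \<rho> w \<longrightarrow>
      norm (f w t) * (\<rho> w ^ k * (1 + \<bar>t\<bar>) ^ m) \<le> C)"

fun weighted_bound_derivs ::
    "'w set \<Rightarrow> ('w \<Rightarrow> real) \<Rightarrow> nat \<Rightarrow> nat \<Rightarrow> nat \<Rightarrow> ('w \<Rightarrow> real \<Rightarrow> complex) \<Rightarrow> bool" where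
  "weighted_bound_derivs W \<rho> 0 k m f = weighted_bound W \<rho> k m f"
| "weighted_bound_derivs W \<rho> (Suc j) k m f \<longleftrightarrow> weighted_bound W \<rho> k m f \<and>
     (\<exists>f'. (\<forall>w\<in>W. \<forall>t. \<bar>t\<bar> < 3/4 * \<rho> w \<longrightarrow> (f w has_vector_derivative f' w t) (at t)) \<and>
        weighted_bound_derivs W \<rho> j k m f')"

lemma weighted_bound_derivs_imp_bound:
  "weighted_bound_derivs W \<rho> j k m f \<Longrightarrow> weighted_bound W \<rho> k m f"
  by (cases j) auto

lemma weighted_bound_derivs_Suc_imp:
  "weighted_bound_derivs W \<rho> (Suc j) k m f \<Longrightarrow> weighted_bound_derivs W \<rho> j k m f"
  by (induction j arbitrary: f) (simp, metis weighted_bound_derivs.simps(2))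

lemma weighted_bound_mono:
  assumes "weighted_bound W \<rho> k m f" "k' \<le> k" "m' \<le> m" "\<forall>w\<in>W. 1 \<le> \<rho> w"
  shows "weighted_bound W \<rho> k' m' f"
proof -
  from assms(1) obtain C where C: "\<forall>w\<in>W. \<forall>t. \<bar>t\<bar> < 3/4 * \<rho> w \<longrightarrow>
      norm (f w t) * (\<rho> w ^ k * (1 + \<bar>t\<bar>) ^ m) \<le> C"
    unfolding weighted_bound_def by blast
  have "norm (f w t) * (\<rho> w ^ k' * (1 + \<bar>t\<bar>) ^ m') \<le> C" if "w \<in> W" "\<bar>t\<bar> < 3/4 * \<rho> w" for w t
  proof -
    have "\<rho> w ^ k' * (1 + \<bar>t\<bar>) ^ m' \<le> \<rho> w ^ k * (1 + \<bar>t\<bar>) ^ m"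
      using assms that by (intro mult_mono power_increasing) auto
    then show ?thesis
      using C that by (meson mult_left_mono norm_ge_zero order_trans)
  qed
  then show ?thesis unfolding weighted_bound_def by blast
qed

lemma weighted_bound_derivs_mono:
  "weighted_bound_derivs W \<rho> j k m f \<Longrightarrow> k' \<le> k \<Longrightarrow> m' \<le> m \<Longrightarrow> \<forall>w\<in>W. 1 \<le> \<rho> w \<Longrightarrow>
    weighted_bound_derivs W \<rho> j k' m' f"
  by (induction j arbitrary: f) (auto intro: weighted_bound_mono)

lemma weighted_bound_add:
  assumes "weighted_bound W \<rho> k m f" "weighted_bound W \<rho> k m g"
  shows "weighted_bound W \<rho> k m (\<lambda>w t. f w t + g w t)"
proof -
  from assms obtain C D where
    C: "\<forall>w\<in>W. \<forall>t. \<bar>t\<bar> < 3/4 * \<rho> w \<longrightarrow> norm (f w t) * (\<rho> w ^ k * (1 + \<bar>t\<bar>) ^ m) \<le> C" and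
    D: "\<forall>w\<in>W. \<forall>t. \<bar>t\<bar> < 3/4 * \<rho> w \<longrightarrow> norm (g w t) * (\<rho> w ^ k * (1 + \<bar>t\<bar>) ^ m) \<le> D"
    unfolding weighted_bound_def by blast
  have "norm (f w t + g w t) * (\<rho> w ^ k * (1 + \<bar>t\<bar>) ^ m) \<le> C + D"
    if "w \<in> W" "\<bar>t\<bar> < 3/4 * \<rho> w" for w t
  proof -
    have "norm (f w t + g w t) * (\<rho> w ^ k * (1 + \<bar>t\<bar>) ^ m)
        \<le> (norm (f w t) + norm (g w t)) * (\<rho> w ^ k * (1 + \<bar>t\<bar>) ^ m)"
      using that by (intro mult_right_mono norm_triangle_ineq) simp
    also have "\<dots> \<le> C + D"
      using C D that by (simp add: distrib_right add_mono)
    finally show ?thesis .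
  qed
  then show ?thesis unfolding weighted_bound_def by blast
qed

lemma weighted_bound_mult:
  assumes "weighted_bound W \<rho> k m f" "weighted_bound W \<rho> k' m' g"
  shows "weighted_bound W \<rho> (k + k') (m + m') (\<lambda>w t. f w t * g w t)"
proof -
  from assms obtain C D where
    C: "\<forall>w\<in>W. \<forall>t. \<bar>t\<bar> < 3/4 * \<rho> w \<longrightarrow> norm (f w t) * (\<rho> w ^ k * (1 + \<bar>t\<bar>) ^ m) \<le> C" and
    D: "\<forall>w\<in>W. \<forall>t. \<bar>t\<bar> < 3/4 * \<rho> w \<longrightarrow> norm (g w t) * (\<rho> w ^ k' * (1 + \<bar>t\<bar>) ^ m') \<le> D"
    unfolding weighted_bound_def by blast
  have "norm (f w t * g w t) * (\<rho> w ^ (k + k') * (1 + \<bar>t\<bar>) ^ (m + m')) \<le> C * D"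
    if "w \<in> W" "\<bar>t\<bar> < 3/4 * \<rho> w" for w t
  proof -
    have "norm (f w t * g w t) * (\<rho> w ^ (k + k') * (1 + \<bar>t\<bar>) ^ (m + m')) =
        (norm (f w t) * (\<rho> w ^ k * (1 + \<bar>t\<bar>) ^ m)) * (norm (g w t) * (\<rho> w ^ k' * (1 + \<bar>t\<bar>) ^ m'))"
      by (simp add: norm_mult power_add algebra_simps)
    also have "\<dots> \<le> C * D"
    proof (rule mult_mono)
      have "0 \<le> norm (f w t) * (\<rho> w ^ k * (1 + \<bar>t\<bar>) ^ m)"
        using that by simp
      then show "0 \<le> C" using C that by (meson order_trans)
      show "0 \<le> norm (g w t) * (\<rho> w ^ k' * (1 + \<bar>t\<bar>) ^ m')"
        using that by simp
    qed (use C D that in auto)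
    finally show ?thesis .
  qed
  then show ?thesis unfolding weighted_bound_def by blast
qed

lemma weighted_bound_cmult:
  assumes "weighted_bound W \<rho> k m f"
  shows "weighted_bound W \<rho> k m (\<lambda>w t. c * f w t)"
proof -
  from assms obtain C where
    C: "\<forall>w\<in>W. \<forall>t. \<bar>t\<bar> < 3/4 * \<rho> w \<longrightarrow> norm (f w t) * (\<rho> w ^ k * (1 + \<bar>t\<bar>) ^ m) \<le> C"
    unfolding weighted_bound_def by blast
  have "norm (c * f w t) * (\<rho> w ^ k * (1 + \<bar>t\<bar>) ^ m) \<le> norm c * C"
    if "w \<in> W" "\<bar>t\<bar> < 3/4 * \<rho> w" for w t
    using C that by (simp add: norm_mult mult.assoc mult_left_mono)
  then show ?thesis unfolding weighted_bound_def by blast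
qed

lemma weighted_bound_derivs_add:
  "weighted_bound_derivs W \<rho> j k m f \<Longrightarrow> weighted_bound_derivs W \<rho> j k m g \<Longrightarrow>
    weighted_bound_derivs W \<rho> j k m (\<lambda>w t. f w t + g w t)"
proof (induction j arbitrary: f g)
  case 0
  then show ?case by (simp add: weighted_bound_add)
next
  case (Suc j)
  from Suc.prems obtain f' g' where
    f': "\<forall>w\<in>W. \<forall>t. \<bar>t\<bar> < 3/4 * \<rho> w \<longrightarrow> (f w has_vector_derivative f' w t) (at t)"
      "weighted_bound_derivs W \<rho> j k m f'" and
    g': "\<forall>w\<in>W. \<forall>t. \<bar>t\<bar> < 3/4 * \<rho> w \<longrightarrow> (g w has_vector_derivative g' w t) (at t)"
      "weighted_bound_derivs W \<rho> j k m g'"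
    by auto
  show ?case
    using Suc.prems Suc.IH[OF f'(2) g'(2)] f'(1) g'(1)
    by (auto intro!: weighted_bound_add exI[of _ "\<lambda>w t. f' w t + g' w t"] derivative_intros)
qed

lemma weighted_bound_derivs_cmult:
  "weighted_bound_derivs W \<rho> j k m f \<Longrightarrow> weighted_bound_derivs W \<rho> j k m (\<lambda>w t. c * f w t)"
proof (induction j arbitrary: f)
  case 0
  then show ?case by (simp add: weighted_bound_cmult)
next
  case (Suc j)
  from Suc.prems obtain f' where
    f': "\<forall>w\<in>W. \<forall>t. \<bar>t\<bar> < 3/4 * \<rho> w \<longrightarrow> (f w has_vector_derivative f' w t) (at t)"
      "weighted_bound_derivs W \<rho> j k m f'"
    by auto
  show ?case
    using Suc.prems Suc.IH[OF f'(2)] f'(1)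
    by (auto intro!: weighted_bound_cmult exI[of _ "\<lambda>w t. c * f' w t"] derivative_intros)
qed

lemma weighted_bound_derivs_one: "weighted_bound_derivs W \<rho> j 0 0 (\<lambda>w t. 1)"
proof (induction j)
  case 0
  then show ?case by (auto simp: weighted_bound_def)
next
  case (Suc j)
  then have "weighted_bound_derivs W \<rho> j 0 0 (\<lambda>w t. 0 * 1)"
    by (rule weighted_bound_derivs_cmult)
  then show ?case by (auto simp: weighted_bound_def intro!: exI[of _ "\<lambda>w t. 0"])
qed

lemma weighted_bound_derivs_mult:
  "weighted_bound_derivs W \<rho> j k m f \<Longrightarrow> weighted_bound_derivs W \<rho> j k' m' g \<Longrightarrow>
    weighted_bound_derivs W \<rho> j (k + k') (m + m') (\<lambda>w t. f w t * g w t)"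
proof (induction j arbitrary: f g)
  case 0
  then show ?case by (simp add: weighted_bound_mult)
next
  case (Suc j)
  from Suc.prems obtain f' g' where
    f': "\<forall>w\<in>W. \<forall>t. \<bar>t\<bar> < 3/4 * \<rho> w \<longrightarrow> (f w has_vector_derivative f' w t) (at t)"
      "weighted_bound_derivs W \<rho> j k m f'" and
    g': "\<forall>w\<in>W. \<forall>t. \<bar>t\<bar> < 3/4 * \<rho> w \<longrightarrow> (g w has_vector_derivative g' w t) (at t)"
      "weighted_bound_derivs W \<rho> j k' m' g'"
    by auto
  have "weighted_bound_derivs W \<rho> j k m f" "weighted_bound_derivs W \<rho> j k' m' g"
    using Suc.prems weighted_bound_derivs_Suc_imp by blast+
  then have "weighted_bound_derivs W \<rho> j (k + k') (m + m') (\<lambda>w t. f w t * g' w t + f' w t * g w t)"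
    by (intro weighted_bound_derivs_add Suc.IH f'(2) g'(2))
  then show ?case
    using Suc.prems f'(1) g'(1) weighted_bound_derivs_imp_bound
    by (auto intro!: weighted_bound_mult exI[of _ "\<lambda>w t. f w t * g' w t + f' w t * g w t"]
        derivative_intros)
qed

lemma oscillatory_integral_by_parts:
  fixes E f q g' d :: "real \<Rightarrow> complex"
  assumes "a \<le> b"
    and dE: "\<And>t. t \<in> {a..b} \<Longrightarrow> (E has_vector_derivative \<i> * d t * E t) (at t)"
    and E1: "\<And>t. t \<in> {a..b} \<Longrightarrow> norm (E t) \<le> 1"
    and qd: "\<And>t. t \<in> {a..b} \<Longrightarrow> q t * d t = 1"
    and dg: "\<And>t. t \<in> {a..b} \<Longrightarrow> ((\<lambda>t. q t * f t) has_vector_derivative g' t) (at t)"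
    and cf: "continuous_on {a..b} f"
  shows "norm (integral {a..b} (\<lambda>t. E t * f t))
    \<le> norm (q a * f a) + norm (q b * f b) + norm (integral {a..b} (\<lambda>t. E t * g' t))"
proof -
  define g where "g t = q t * f t" for t
  have "((\<lambda>t. E t * g t) has_vector_derivative \<i> * (E t * f t) + E t * g' t) (at t within {a..b})"
    if t: "t \<in> {a..b}" for t
  proof -
    have "((\<lambda>t. E t * g t) has_vector_derivative E t * g' t + \<i> * d t * E t * g t) (at t)"
      using dE[OF t] dg[OF t] unfolding g_def by (intro has_vector_derivative_mult) auto
    moreover have "\<i> * d t * E t * g t = \<i> * (E t * f t) * (q t * d t)"
      unfolding g_def by (simp add: algebra_simps)
    ultimately show ?thesis
      using qd[OF t] by (simp add: add.commute has_vector_derivative_at_within)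
  qed
  then have FT: "((\<lambda>t. \<i> * (E t * f t) + E t * g' t) has_integral E b * g b - E a * g a) {a..b}"
    by (rule fundamental_theorem_of_calculus[OF \<open>a \<le> b\<close>])
  have "continuous_on {a..b} E"
    using dE by (meson continuous_at_imp_continuous_on has_vector_derivative_continuous)
  then have iEf: "(\<lambda>t. \<i> * (E t * f t)) integrable_on {a..b}"
    by (intro integrable_continuous_interval continuous_intros cf)
  have iEg: "(\<lambda>t. E t * g' t) integrable_on {a..b}"
    using integrable_diff[OF has_integral_integrable[OF FT] iEf] by simp
  have "\<i> * integral {a..b} (\<lambda>t. E t * f t) + integral {a..b} (\<lambda>t. E t * g' t) = E b * g b - E a * g a"
    using integral_unique[OF FT] integral_add[OF iEf iEg] by simp
  then have "\<i> * integral {a..b} (\<lambda>t. E t * f t)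
      = E b * g b - E a * g a - integral {a..b} (\<lambda>t. E t * g' t)"
    by (simp add: eq_diff_eq)
  then have "norm (integral {a..b} (\<lambda>t. E t * f t))
      = norm (E b * g b - E a * g a - integral {a..b} (\<lambda>t. E t * g' t))"
    by (metis mult_1 norm_ii norm_mult)
  also have "\<dots> \<le> norm (E b * g b) + norm (E a * g a) + norm (integral {a..b} (\<lambda>t. E t * g' t))"
    by (intro order_trans[OF norm_triangle_ineq4] add_right_mono norm_triangle_ineq4)
  also have "\<dots> \<le> norm (g a) + norm (g b) + norm (integral {a..b} (\<lambda>t. E t * g' t))"
  proof -
    have "norm (E t * g t) \<le> norm (g t)" if "t \<in> {a..b}" for t
      using E1[OF that] by (simp add: norm_mult mult_left_le_one_le)
    from this[of a] this[of b] show ?thesis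
      using \<open>a \<le> b\<close> by simp
  qed
  finally show ?thesis unfolding g_def .
qed

lemma norm_integral_interval_le:
  fixes f :: "real \<Rightarrow> 'a::banach"
  assumes "a \<le> b" "0 \<le> B" "\<And>t. t \<in> {a..b} \<Longrightarrow> norm (f t) \<le> B"
  shows "norm (integral {a..b} f) \<le> B * (b - a)"
proof (cases "f integrable_on {a..b}")
  case True
  then have "(f has_integral integral {a..b} f) (cbox a b)"
    by (simp add: integrable_integral)
  from has_integral_bound[OF assms(2) this] assms(1,3) show ?thesis
    by simp
next
  case False
  then show ?thesis using assms by (simp add: not_integrable_integral)
qed

lemma weighted_integral_bound:
  assumes \<rho>1: "\<forall>w\<in>W. 1 \<le> \<rho> w"
    and E1: "\<forall>w\<in>W. \<forall>t. \<bar>t\<bar> < 3/4 * \<rho> w \<longrightarrow> norm (E w t) \<le> 1"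
    and f: "weighted_bound W \<rho> k 0 f"
  shows "\<exists>C. \<forall>w\<in>W. norm (integral {-\<rho> w/2..\<rho> w/2} (\<lambda>t. E w t * f w t)) * \<rho> w ^ k \<le> C * \<rho> w"
proof -
  from f obtain C where C: "\<forall>w\<in>W. \<forall>t. \<bar>t\<bar> < 3/4 * \<rho> w \<longrightarrow> norm (f w t) * \<rho> w ^ k \<le> C"
    unfolding weighted_bound_def by auto
  have "norm (integral {-\<rho> w/2..\<rho> w/2} (\<lambda>t. E w t * f w t)) * \<rho> w ^ k \<le> max C 0 * \<rho> w"
    if w: "w \<in> W" for w
  proof -
    have r1: "1 \<le> \<rho> w" using \<rho>1 w by auto
    have bound: "norm (E w t * f w t) \<le> max C 0 / \<rho> w ^ k" if "t \<in> {-\<rho> w/2..\<rho> w/2}" for t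
    proof -
      have t: "\<bar>t\<bar> < 3/4 * \<rho> w" using r1 that by auto
      have "norm (E w t * f w t) \<le> norm (f w t)"
        using E1 w t by (simp add: norm_mult mult_left_le_one_le)
      also have "\<dots> \<le> max C 0 / \<rho> w ^ k"
        using C w t r1 by (simp add: pos_le_divide_eq le_max_iff_disj)
      finally show ?thesis .
    qed
    have "norm (integral {-\<rho> w/2..\<rho> w/2} (\<lambda>t. E w t * f w t))
        \<le> max C 0 / \<rho> w ^ k * (\<rho> w/2 - - \<rho> w/2)"
      using r1 by (intro norm_integral_interval_le bound) auto
    then show ?thesis using r1 by (simp add: field_simps)
  qed
  then show ?thesis by blast
qed

lemma endpoint_weight_bound:
  fixes r c C :: real
  assumes "1 \<le> r" "\<bar>t\<bar> = r/2" "0 \<le> c" "c * (r ^ (1 + k) * (1 + \<bar>t\<bar>) ^ Suc N) \<le> C"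
  shows "c * r ^ (k + Suc N) \<le> 2 ^ N * max C 0 * r"
proof -
  have "r ^ N = 2 ^ N * (r/2) ^ N" by (simp add: power_divide)
  also have "\<dots> \<le> 2 ^ N * (1 + \<bar>t\<bar>) ^ Suc N"
    using assms(1,2) by (intro mult_left_mono order_trans[OF power_mono power_increasing]) auto
  finally have "c * r ^ (1 + k) * r ^ N \<le> c * r ^ (1 + k) * (2 ^ N * (1 + \<bar>t\<bar>) ^ Suc N)"
    using assms(1,3) by (intro mult_left_mono) auto
  also have "\<dots> = 2 ^ N * (c * (r ^ (1 + k) * (1 + \<bar>t\<bar>) ^ Suc N))"
    by (simp only: mult_ac)
  also have "\<dots> \<le> 2 ^ N * max C 0"
    using assms(4) by (intro mult_left_mono) auto
  also have "\<dots> \<le> 2 ^ N * max C 0 * r"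
    using assms(1) mult_left_mono[of 1 r "2 ^ N * max C 0"] by simp
  finally show ?thesis by (simp add: power_add algebra_simps)
qed

lemma oscillatory_integral_by_parts_scaled:
  fixes E f q g' d :: "real \<Rightarrow> complex" and r :: real
  assumes r1: "1 \<le> r"
    and dE: "\<And>t. \<bar>t\<bar> < 3/4 * r \<Longrightarrow> (E has_vector_derivative \<i> * d t * E t) (at t)"
    and E1: "\<And>t. \<bar>t\<bar> < 3/4 * r \<Longrightarrow> norm (E t) \<le> 1"
    and qd: "\<And>t. \<bar>t\<bar> < 3/4 * r \<Longrightarrow> q t * d t = 1"
    and cf: "\<And>t. \<bar>t\<bar> < 3/4 * r \<Longrightarrow> isCont f t"
    and dg: "\<And>t. \<bar>t\<bar> < 3/4 * r \<Longrightarrow> ((\<lambda>t. q t * f t) has_vector_derivative g' t) (at t)"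
    and C: "\<And>t. \<bar>t\<bar> < 3/4 * r \<Longrightarrow> norm (q t * f t) * (r ^ (1 + k) * (1 + \<bar>t\<bar>) ^ Suc N) \<le> C"
  shows "norm (integral {-r/2..r/2} (\<lambda>t. E t * f t)) * r ^ (k + Suc N)
    \<le> 2 * 2 ^ N * max C 0 * r + norm (integral {-r/2..r/2} (\<lambda>t. E t * g' t)) * r ^ (1 + k + N)"
proof -
  have near: "\<bar>t\<bar> < 3/4 * r" if "t \<in> {-r/2..r/2}" for t
    using r1 that by auto
  have endpoint: "norm (q t * f t) * r ^ (k + Suc N) \<le> 2 ^ N * max C 0 * r" if "\<bar>t\<bar> = r/2" for t
    using C[of t] that r1 by (intro endpoint_weight_bound) auto
  have "norm (integral {-r/2..r/2} (\<lambda>t. E t * f t))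
      \<le> norm (q (-r/2) * f (-r/2)) + norm (q (r/2) * f (r/2))
        + norm (integral {-r/2..r/2} (\<lambda>t. E t * g' t))"
    using r1 near dE E1 qd dg cf
    by (intro oscillatory_integral_by_parts[where d = d] continuous_at_imp_continuous_on) auto
  then have "norm (integral {-r/2..r/2} (\<lambda>t. E t * f t)) * r ^ (k + Suc N)
      \<le> norm (q (-r/2) * f (-r/2)) * r ^ (k + Suc N) + norm (q (r/2) * f (r/2)) * r ^ (k + Suc N)
        + norm (integral {-r/2..r/2} (\<lambda>t. E t * g' t)) * r ^ (1 + k + N)"
    using r1 by (simp add: mult_right_mono flip: distrib_right)
  also have "\<dots> \<le> 2 ^ N * max C 0 * r + 2 ^ N * max C 0 * r
      + norm (integral {-r/2..r/2} (\<lambda>t. E t * g' t)) * r ^ (1 + k + N)"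
    using endpoint[of "-r/2"] endpoint[of "r/2"] r1 by (intro add_mono) auto
  finally show ?thesis by (simp add: mult_ac)
qed

text \<open>Non-stationary phase: if \<open>E' = i \<phi>' E\<close> and \<open>q = 1/\<phi>'\<close> is of size \<open>\<rho>\<^sup>-\<^sup>1\<close> with all its
  derivatives, each integration by parts against \<open>E\<close> gains a factor \<open>\<rho>\<^sup>-\<^sup>1\<close>. The boundary terms
  at \<open>t = \<plusminus>\<rho>/2\<close> are just as small because \<open>f\<close> also decays like \<open>(1 + \<bar>t\<bar>)\<^sup>-\<^sup>N\<close>.\<close>

lemma oscillatory_integral_decay:
  assumes \<rho>1: "\<forall>w\<in>W. 1 \<le> \<rho> w"
    and dE: "\<forall>w\<in>W. \<forall>t. \<bar>t\<bar> < 3/4 * \<rho> w \<longrightarrow> (E w has_vector_derivative \<i> * d w t * E w t) (at t)"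
    and E1: "\<forall>w\<in>W. \<forall>t. \<bar>t\<bar> < 3/4 * \<rho> w \<longrightarrow> norm (E w t) \<le> 1"
    and qd: "\<forall>w\<in>W. \<forall>t. \<bar>t\<bar> < 3/4 * \<rho> w \<longrightarrow> q w t * d w t = 1"
    and q: "\<forall>j. weighted_bound_derivs W \<rho> j 1 0 q"
  shows "weighted_bound_derivs W \<rho> N k N f \<Longrightarrow>
    \<exists>C. \<forall>w\<in>W. norm (integral {-\<rho> w/2..\<rho> w/2} (\<lambda>t. E w t * f w t)) * \<rho> w ^ (k + N) \<le> C * \<rho> w"
proof (induction N arbitrary: k f)
  case 0
  then show ?case
    using weighted_integral_bound[OF \<rho>1 E1] weighted_bound_derivs_imp_bound by fastforce
next
  case (Suc N)
  from Suc.prems obtain f' where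
    f': "\<forall>w\<in>W. \<forall>t. \<bar>t\<bar> < 3/4 * \<rho> w \<longrightarrow> (f w has_vector_derivative f' w t) (at t)"
    by auto
  have "weighted_bound_derivs W \<rho> (Suc N) (1 + k) (0 + Suc N) (\<lambda>w t. q w t * f w t)"
    by (rule weighted_bound_derivs_mult[OF spec[OF q] Suc.prems])
  then obtain g' where
    g': "\<forall>w\<in>W. \<forall>t. \<bar>t\<bar> < 3/4 * \<rho> w \<longrightarrow> ((\<lambda>t. q w t * f w t) has_vector_derivative g' w t) (at t)"
    and g'_bound: "weighted_bound_derivs W \<rho> N (1 + k) (Suc N) g'"
    and g_bound: "weighted_bound W \<rho> (1 + k) (Suc N) (\<lambda>w t. q w t * f w t)"
    by auto
  obtain C1 where C1: "\<forall>w\<in>W. norm (integral {-\<rho> w/2..\<rho> w/2} (\<lambda>t. E w t * g' w t))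
      * \<rho> w ^ (1 + k + N) \<le> C1 * \<rho> w"
    using Suc.IH[OF weighted_bound_derivs_mono[OF g'_bound order_refl _ \<rho>1]] by auto
  obtain C2 where C2: "\<forall>w\<in>W. \<forall>t. \<bar>t\<bar> < 3/4 * \<rho> w \<longrightarrow>
      norm (q w t * f w t) * (\<rho> w ^ (1 + k) * (1 + \<bar>t\<bar>) ^ Suc N) \<le> C2"
    using g_bound unfolding weighted_bound_def by blast
  have "norm (integral {-\<rho> w/2..\<rho> w/2} (\<lambda>t. E w t * f w t)) * \<rho> w ^ (k + Suc N)
      \<le> (2 * 2 ^ N * max C2 0 + C1) * \<rho> w" if w: "w \<in> W" for w
  proof -
    have "norm (integral {-\<rho> w/2..\<rho> w/2} (\<lambda>t. E w t * f w t)) * \<rho> w ^ (k + Suc N)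
        \<le> 2 * 2 ^ N * max C2 0 * \<rho> w
          + norm (integral {-\<rho> w/2..\<rho> w/2} (\<lambda>t. E w t * g' w t)) * \<rho> w ^ (1 + k + N)"
      using \<rho>1 dE E1 qd g' C2 w f'[THEN bspec, THEN spec, THEN mp, THEN has_vector_derivative_continuous]
      by (intro oscillatory_integral_by_parts_scaled[where d = "d w"]) auto
    then show ?thesis
      using bspec[OF C1 w] by (simp add: algebra_simps)
  qed
  then show ?case by blast
qed

lemma schwartz_weighted_bound_derivs:
  assumes dD: "\<forall>k x. (D k has_vector_derivative D (Suc k) x) (at x)"
    and bD: "\<forall>k m. \<exists>C. \<forall>t. norm (D k t) * (1 + \<bar>t\<bar>) ^ m \<le> C"
  shows "weighted_bound_derivs W \<rho> j 0 m (\<lambda>w t. cnj (D k t))"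
proof (induction j arbitrary: k)
  case 0
  obtain C where "\<forall>t. norm (D k t) * (1 + \<bar>t\<bar>) ^ m \<le> C" using bD by blast
  then show ?case by (auto simp: weighted_bound_def)
next
  case (Suc j)
  obtain C where "\<forall>t. norm (D k t) * (1 + \<bar>t\<bar>) ^ m \<le> C" using bD by blast
  then have "weighted_bound W \<rho> 0 m (\<lambda>w t. cnj (D k t))"
    by (auto simp: weighted_bound_def)
  moreover have "((\<lambda>t. cnj (D k t)) has_vector_derivative cnj (D (Suc k) t)) (at t)" for t
    using dD by (auto intro: has_vector_derivative_cnj)
  ultimately show ?case
    using Suc[of "Suc k"] by (auto intro!: exI[of _ "\<lambda>w t. cnj (D (Suc k) t)"])
qed

text \<open>\<open>y = t + x\<close> is the variable of the STFT integral, so \<open>yabs = \<bar>y\<bar>\<close> on the region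
  \<open>\<bar>t\<bar> < 3/4 \<bar>x\<bar>\<close>, where the phase of the integrand is \<open>\<gamma> \<bar>y\<bar>\<^sup>p - y \<xi>\<close>. The threshold \<open>R\<close> is
  chosen so large that there the chirp frequency \<open>p \<bar>y\<bar>\<^sup>p\<^sup>-\<^sup>1\<close> dominates \<open>\<xi>\<close>.\<close>

locale chirp_sector =
  fixes p s A R :: real
  assumes p2: "p > 2" and sin_nonneg: "0 \<le> sin (pi * p)" and s: "s = 1 \<or> s = -1"
    and A0: "A \<ge> 0" and R4: "R \<ge> 4" and R_large: "A + 1 \<le> p * (R/4) powr (p - 2) / 4"
begin

definition \<gamma> :: complex where
  "\<gamma> = (if s = 1 then 1 else exp (\<i> * of_real (pi * p)))"

lemma norm_\<gamma>: "norm \<gamma> = 1"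
  by (simp add: \<gamma>_def)

lemma Im_\<gamma>: "0 \<le> Im \<gamma>"
  using sin_nonneg by (simp add: \<gamma>_def Im_exp)

lemma chirp_eq:
  assumes "0 < s * y"
  shows "chirp p y = exp (\<i> * (\<gamma> * of_real ((s * y) powr p)))"
  using s assms by (auto simp: \<gamma>_def chirp_def cpow_def)

definition sector :: "(real \<times> real) set" where
  "sector = {w. s * fst w \<ge> R \<and> \<bar>snd w\<bar> \<le> A * \<bar>fst w\<bar>}"
definition yabs :: "real \<times> real \<Rightarrow> real \<Rightarrow> real" where
  "yabs w t = s * (t + fst w)"
definition wave :: "real \<times> real \<Rightarrow> real \<Rightarrow> complex" where
  "wave w t = exp (\<i> * (\<gamma> * of_real (yabs w t powr p) - of_real ((t + fst w) * snd w)))"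
definition freq :: "real \<times> real \<Rightarrow> real \<Rightarrow> complex" where
  "freq w t = \<gamma> * of_real (s * p * yabs w t powr (p - 1))"
definition dphase :: "real \<times> real \<Rightarrow> real \<Rightarrow> complex" where
  "dphase w t = freq w t - of_real (snd w)"
definition dphase_inv :: "real \<times> real \<Rightarrow> real \<Rightarrow> complex" where
  "dphase_inv w t = 1 / dphase w t"
definition recip :: "real \<times> real \<Rightarrow> real \<Rightarrow> complex" where
  "recip w t = 1 / complex_of_real (t + fst w)"
definition xi_ratio :: "real \<times> real \<Rightarrow> real \<Rightarrow> complex" where
  "xi_ratio w t = of_real (snd w) * dphase_inv w t"

lemma sector_bounds:
  assumes "w \<in> sector"
  shows "s * fst w = \<bar>fst w\<bar>" "4 \<le> \<bar>fst w\<bar>" "\<bar>snd w\<bar> \<le> A * \<bar>fst w\<bar>" "R \<le> \<bar>fst w\<bar>"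
  using assms s R4 unfolding sector_def by auto

lemma sector_scale_ge_1: "\<forall>w\<in>sector. 1 \<le> \<bar>fst w\<bar>"
  using sector_bounds(2) by fastforce

lemma yabs_lower:
  assumes "w \<in> sector" "\<bar>t\<bar> < 3/4 * \<bar>fst w\<bar>"
  shows "\<bar>fst w\<bar>/4 \<le> yabs w t" "0 < yabs w t" "t + fst w \<noteq> 0"
proof -
  have "- \<bar>t\<bar> \<le> s * t" using s by auto
  then show "\<bar>fst w\<bar>/4 \<le> yabs w t"
    unfolding yabs_def using sector_bounds[OF assms(1)] assms(2) by (simp add: algebra_simps)
  then show "0 < yabs w t" using sector_bounds(2)[OF assms(1)] by linarith
  then show "t + fst w \<noteq> 0" unfolding yabs_def by auto
qed

lemma norm_freq_lower:
  assumes "w \<in> sector" "\<bar>t\<bar> < 3/4 * \<bar>fst w\<bar>"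
  shows "(A + 1) * \<bar>fst w\<bar> \<le> norm (freq w t)"
proof -
  define r where "r = \<bar>fst w\<bar>"
  have r4: "4 \<le> r" and Rr: "R \<le> r" using sector_bounds[OF assms(1)] r_def by auto
  have y: "r/4 \<le> yabs w t" using yabs_lower[OF assms] r_def by auto
  have "(A + 1) * r \<le> p * (R/4) powr (p - 2) / 4 * r"
    using R_large r4 by (intro mult_right_mono) auto
  also have "\<dots> = p * ((R/4) powr (p - 2) * (r/4))" by simp
  also have "\<dots> \<le> p * ((r/4) powr (p - 2) * (r/4))"
    using Rr R4 p2 r4 by (intro mult_left_mono mult_right_mono powr_mono2) auto
  also have "(r/4) powr (p - 2) * (r/4) = (r/4) powr (p - 1)"
    using r4 powr_add[of "r/4" "p - 2" 1] by simp
  also have "p * \<dots> \<le> p * yabs w t powr (p - 1)"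
    using y p2 r4 by (intro mult_left_mono powr_mono2) auto
  also have "\<dots> = norm (freq w t)"
    unfolding freq_def using norm_\<gamma> s p2 by (auto simp: norm_mult abs_mult)
  finally show ?thesis unfolding r_def .
qed

lemma norm_dphase_lower:
  assumes "w \<in> sector" "\<bar>t\<bar> < 3/4 * \<bar>fst w\<bar>"
  shows "\<bar>fst w\<bar> \<le> norm (dphase w t)"
proof -
  have "norm (freq w t) - \<bar>snd w\<bar> \<le> norm (dphase w t)"
    unfolding dphase_def using norm_triangle_ineq2[of "freq w t" "of_real (snd w)"] by simp
  then show ?thesis
    using norm_freq_lower[OF assms] sector_bounds(3)[OF assms(1)] by (simp add: algebra_simps)
qed

lemma dphase_nonzero: "w \<in> sector \<Longrightarrow> \<bar>t\<bar> < 3/4 * \<bar>fst w\<bar> \<Longrightarrow> dphase w t \<noteq> 0"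
  using norm_dphase_lower[of w t] sector_bounds(2)[of w] by auto

lemma norm_dphase_inv: "w \<in> sector \<Longrightarrow> \<bar>t\<bar> < 3/4 * \<bar>fst w\<bar> \<Longrightarrow> norm (dphase_inv w t) * \<bar>fst w\<bar> \<le> 1"
  using norm_dphase_lower[of w t] sector_bounds(2)[of w] unfolding dphase_inv_def
  by (simp add: norm_divide divide_le_eq)

lemma norm_xi_ratio:
  assumes "w \<in> sector" "\<bar>t\<bar> < 3/4 * \<bar>fst w\<bar>"
  shows "norm (xi_ratio w t) \<le> A"
proof -
  have "norm (xi_ratio w t) = \<bar>snd w\<bar> * norm (dphase_inv w t)"
    unfolding xi_ratio_def by (simp add: norm_mult)
  also have "\<dots> \<le> A * \<bar>fst w\<bar> * norm (dphase_inv w t)"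
    using sector_bounds(3)[OF assms(1)] by (intro mult_right_mono) auto
  also have "\<dots> = A * (norm (dphase_inv w t) * \<bar>fst w\<bar>)" by simp
  also have "\<dots> \<le> A"
    using norm_dphase_inv[OF assms] A0 by (simp add: mult_left_le)
  finally show ?thesis .
qed

lemma norm_recip:
  assumes "w \<in> sector" "\<bar>t\<bar> < 3/4 * \<bar>fst w\<bar>"
  shows "norm (recip w t) * \<bar>fst w\<bar> \<le> 4"
proof -
  have "\<bar>t + fst w\<bar> = yabs w t"
    using yabs_lower(2)[OF assms] s unfolding yabs_def by (auto simp: abs_mult)
  moreover have "norm (recip w t) = 1 / \<bar>t + fst w\<bar>"
    unfolding recip_def by (simp only: norm_divide norm_one norm_of_real)
  ultimately show ?thesis
    using yabs_lower[OF assms] by (simp add: divide_le_eq)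
qed

lemma norm_wave: "norm (wave w t) \<le> 1"
  using Im_\<gamma> unfolding wave_def by simp

lemma yabs_powr_has_derivative:
  assumes "w \<in> sector" "\<bar>t\<bar> < 3/4 * \<bar>fst w\<bar>"
  shows "((\<lambda>t. yabs w t powr e) has_real_derivative e * yabs w t powr (e - 1) * s) (at t)"
proof -
  have "((\<lambda>t. s * (t + fst w)) has_real_derivative s) (at t)"
    by (auto intro!: derivative_eq_intros)
  from DERIV_fun_powr[OF this, of e] yabs_lower[OF assms] show ?thesis
    unfolding yabs_def by simp
qed

lemma wave_has_derivative:
  assumes "w \<in> sector" "\<bar>t\<bar> < 3/4 * \<bar>fst w\<bar>"
  shows "(wave w has_vector_derivative \<i> * dphase w t * wave w t) (at t)"
proof -
  define phase where
    "phase t = \<i> * (\<gamma> * of_real (yabs w t powr p) - of_real ((t + fst w) * snd w))" for t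
  have "((\<lambda>t. complex_of_real (yabs w t powr p)) has_vector_derivative
      of_real (p * yabs w t powr (p - 1) * s)) (at t)"
    by (rule has_vector_derivative_of_real[OF yabs_powr_has_derivative[OF assms]])
  moreover have "((\<lambda>t. complex_of_real ((t + fst w) * snd w)) has_vector_derivative of_real (snd w)) (at t)"
    by (rule has_vector_derivative_of_real) (auto intro!: derivative_eq_intros)
  ultimately have "(phase has_vector_derivative
      \<i> * (\<gamma> * of_real (p * yabs w t powr (p - 1) * s) - of_real (snd w))) (at t)"
    unfolding phase_def by (intro has_vector_derivative_mult_right has_vector_derivative_diff)
  moreover have "\<gamma> * of_real (p * yabs w t powr (p - 1) * s) - of_real (snd w) = dphase w t"
    unfolding dphase_def freq_def by (simp add: algebra_simps)
  ultimately have "(phase has_vector_derivative \<i> * dphase w t) (at t)"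
    by simp
  from field_vector_diff_chain_at[OF this DERIV_exp] show ?thesis
    unfolding phase_def wave_def by (simp add: comp_def mult.assoc)
qed

lemma freq_has_derivative:
  assumes "w \<in> sector" "\<bar>t\<bar> < 3/4 * \<bar>fst w\<bar>"
  shows "(freq w has_vector_derivative (of_real p - 1) * recip w t * freq w t) (at t)"
proof -
  define y where "y = yabs w t"
  have y0: "0 < y" and tx: "t + fst w \<noteq> 0" using yabs_lower[OF assms] y_def by auto
  have "y powr (p - 1) = y powr (p - 1 - 1) * y"
    using y0 powr_add[of y "p - 1 - 1" 1] by simp
  then have real_id: "s * p * ((p - 1) * y powr (p - 1 - 1) * s) * (t + fst w)
      = (p - 1) * (s * p * y powr (p - 1))"
    using s unfolding y_def yabs_def by (auto simp: algebra_simps)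
  have "\<gamma> * of_real (s * p * ((p - 1) * y powr (p - 1 - 1) * s))
      = \<gamma> * of_real ((p - 1) * (s * p * y powr (p - 1)) / (t + fst w))"
    unfolding real_id[symmetric] using tx by simp
  also have "\<dots> = (of_real p - 1) * recip w t * freq w t"
    unfolding recip_def freq_def y_def by (simp add: field_simps)
  finally have chain_rule_value: "\<gamma> * of_real (s * p * ((p - 1) * y powr (p - 1 - 1) * s))
      = (of_real p - 1) * recip w t * freq w t" .
  have "((\<lambda>t. \<gamma> * of_real (s * p * yabs w t powr (p - 1))) has_vector_derivative
      \<gamma> * of_real (s * p * ((p - 1) * yabs w t powr (p - 1 - 1) * s))) (at t)"
    by (intro has_vector_derivative_mult_right has_vector_derivative_of_real DERIV_cmult
        yabs_powr_has_derivative[OF assms])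
  then show ?thesis unfolding chain_rule_value[unfolded y_def] freq_def[abs_def] .
qed

text \<open>The derivatives of \<open>recip\<close>, \<open>dphase_inv\<close> and \<open>xi_ratio\<close> are polynomials in these three
  functions; this closed system is what makes all derivatives of \<open>dphase_inv\<close> of size \<open>\<bar>x\<bar>\<^sup>-\<^sup>1\<close>.\<close>

lemma recip_has_derivative:
  assumes "w \<in> sector" "\<bar>t\<bar> < 3/4 * \<bar>fst w\<bar>"
  shows "(recip w has_vector_derivative (-1) * (recip w t * recip w t)) (at t)"
proof -
  have nz: "complex_of_real (t + fst w) \<noteq> 0"
    using yabs_lower(3)[OF assms] by (metis of_real_eq_0_iff)
  have "((\<lambda>t. complex_of_real (t + fst w)) has_vector_derivative 1) (at t)"
    using has_vector_derivative_of_real[of "\<lambda>t. t + fst w" 1 "at t"]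
    by (auto intro!: derivative_eq_intros)
  from field_vector_diff_chain_at[OF this DERIV_inverse[OF nz]] show ?thesis
    unfolding recip_def by (simp add: comp_def power2_eq_square divide_inverse)
qed

lemma dphase_inv_has_derivative:
  assumes "w \<in> sector" "\<bar>t\<bar> < 3/4 * \<bar>fst w\<bar>"
  shows "(dphase_inv w has_vector_derivative
      (1 - of_real p) * (recip w t * ((1 + xi_ratio w t) * dphase_inv w t))) (at t)"
proof -
  have nz: "dphase w t \<noteq> 0" using dphase_nonzero[OF assms] .
  have "(dphase w has_vector_derivative (of_real p - 1) * recip w t * freq w t) (at t)"
    unfolding dphase_def[abs_def]
    using has_vector_derivative_diff[OF freq_has_derivative[OF assms] has_vector_derivative_const]
    by simp
  from field_vector_diff_chain_at[OF this DERIV_inverse[OF nz]]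
  have "(dphase_inv w has_vector_derivative
      - (of_real p - 1) * recip w t * (freq w t * dphase_inv w t) * dphase_inv w t) (at t)"
    unfolding dphase_inv_def by (simp add: comp_def power2_eq_square divide_inverse algebra_simps)
  moreover have "freq w t * dphase_inv w t = 1 + xi_ratio w t"
    using nz unfolding xi_ratio_def dphase_inv_def dphase_def by (simp add: field_simps)
  ultimately show ?thesis by (simp add: algebra_simps)
qed

lemma xi_ratio_has_derivative:
  assumes "w \<in> sector" "\<bar>t\<bar> < 3/4 * \<bar>fst w\<bar>"
  shows "(xi_ratio w has_vector_derivative
      (1 - of_real p) * (recip w t * ((1 + xi_ratio w t) * xi_ratio w t))) (at t)"
proof -
  have "xi_ratio w = (\<lambda>t. of_real (snd w) * dphase_inv w t)"
    by (auto simp: xi_ratio_def fun_eq_iff)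
  with has_vector_derivative_mult_right[OF dphase_inv_has_derivative[OF assms], of "of_real (snd w)"]
  show ?thesis
    by (simp add: xi_ratio_def algebra_simps)
qed

lemma recip_weighted_bound: "weighted_bound_derivs sector (\<lambda>w. \<bar>fst w\<bar>) j 1 0 recip"
proof (induction j)
  have bound: "weighted_bound sector (\<lambda>w. \<bar>fst w\<bar>) 1 0 recip"
    unfolding weighted_bound_def using norm_recip by (intro exI[of _ 4]) auto
  {
    case 0
    from bound show ?case by simp
  next
    case (Suc j)
    have "weighted_bound_derivs sector (\<lambda>w. \<bar>fst w\<bar>) j (1 + 1) (0 + 0)
        (\<lambda>w t. (-1) * (recip w t * recip w t))"
      by (intro weighted_bound_derivs_cmult weighted_bound_derivs_mult Suc)
    then have "weighted_bound_derivs sector (\<lambda>w. \<bar>fst w\<bar>) j 1 0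
        (\<lambda>w t. (-1) * (recip w t * recip w t))"
      by (rule weighted_bound_derivs_mono) (use sector_scale_ge_1 in auto)
    with bound recip_has_derivative show ?case
      by (auto intro!: exI[of _ "\<lambda>w t. (-1) * (recip w t * recip w t)"])
  }
qed

lemma dphase_inv_weighted_bound:
  "weighted_bound_derivs sector (\<lambda>w. \<bar>fst w\<bar>) j 1 0 dphase_inv \<and>
    weighted_bound_derivs sector (\<lambda>w. \<bar>fst w\<bar>) j 0 0 xi_ratio"
proof (induction j)
  have bounds: "weighted_bound sector (\<lambda>w. \<bar>fst w\<bar>) 1 0 dphase_inv"
    "weighted_bound sector (\<lambda>w. \<bar>fst w\<bar>) 0 0 xi_ratio"
    unfolding weighted_bound_def using norm_dphase_inv norm_xi_ratio
    by (intro exI[of _ 1] exI[of _ A]; auto)+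
  {
    case 0
    from bounds show ?case by simp
  next
    case (Suc j)
    then have q: "weighted_bound_derivs sector (\<lambda>w. \<bar>fst w\<bar>) j 1 0 dphase_inv"
      and v: "weighted_bound_derivs sector (\<lambda>w. \<bar>fst w\<bar>) j 0 0 xi_ratio"
      by auto
    have v1: "weighted_bound_derivs sector (\<lambda>w. \<bar>fst w\<bar>) j 0 0 (\<lambda>w t. 1 + xi_ratio w t)"
      by (rule weighted_bound_derivs_add[OF weighted_bound_derivs_one v])
    have "weighted_bound_derivs sector (\<lambda>w. \<bar>fst w\<bar>) j (1 + (0 + 1)) (0 + (0 + 0))
        (\<lambda>w t. (1 - of_real p) * (recip w t * ((1 + xi_ratio w t) * dphase_inv w t)))"
      by (intro weighted_bound_derivs_cmult weighted_bound_derivs_mult recip_weighted_bound v1 q)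
    then have dq: "weighted_bound_derivs sector (\<lambda>w. \<bar>fst w\<bar>) j 1 0
        (\<lambda>w t. (1 - of_real p) * (recip w t * ((1 + xi_ratio w t) * dphase_inv w t)))"
      by (rule weighted_bound_derivs_mono) (use sector_scale_ge_1 in auto)
    have "weighted_bound_derivs sector (\<lambda>w. \<bar>fst w\<bar>) j (1 + (0 + 0)) (0 + (0 + 0))
        (\<lambda>w t. (1 - of_real p) * (recip w t * ((1 + xi_ratio w t) * xi_ratio w t)))"
      by (intro weighted_bound_derivs_cmult weighted_bound_derivs_mult recip_weighted_bound v1 v)
    then have dv: "weighted_bound_derivs sector (\<lambda>w. \<bar>fst w\<bar>) j 0 0
        (\<lambda>w t. (1 - of_real p) * (recip w t * ((1 + xi_ratio w t) * xi_ratio w t)))"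
      by (rule weighted_bound_derivs_mono) (use sector_scale_ge_1 in auto)
    have "weighted_bound_derivs sector (\<lambda>w. \<bar>fst w\<bar>) (Suc j) 1 0 dphase_inv"
      using bounds(1) dq dphase_inv_has_derivative by (auto intro!: exI[of _
          "\<lambda>w t. (1 - of_real p) * (recip w t * ((1 + xi_ratio w t) * dphase_inv w t))"])
    moreover have "weighted_bound_derivs sector (\<lambda>w. \<bar>fst w\<bar>) (Suc j) 0 0 xi_ratio"
      using bounds(2) dv xi_ratio_has_derivative by (auto intro!: exI[of _
          "\<lambda>w t. (1 - of_real p) * (recip w t * ((1 + xi_ratio w t) * xi_ratio w t))"])
    ultimately show ?case ..
  }
qed

lemma wave_integral_decay:
  assumes "\<forall>k x. (D k has_vector_derivative D (Suc k) x) (at x)"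
    and "\<forall>k m. \<exists>C. \<forall>t. norm (D k t) * (1 + \<bar>t\<bar>) ^ m \<le> C"
  shows "\<exists>C. \<forall>w\<in>sector. norm (integral {-\<bar>fst w\<bar>/2..\<bar>fst w\<bar>/2} (\<lambda>t. wave w t * cnj (D 0 t)))
      * \<bar>fst w\<bar> ^ N \<le> C * \<bar>fst w\<bar>"
  using oscillatory_integral_decay[OF sector_scale_ge_1 _ _ _ _
      schwartz_weighted_bound_derivs[OF assms], where E = wave and d = dphase and q = dphase_inv]
    wave_has_derivative norm_wave dphase_nonzero dphase_inv_weighted_bound
  by (simp add: dphase_inv_def)

end

lemma schwartz_derivatives:
  assumes "schwartz phi"
  obtains D where "D 0 = phi" "\<forall>k x. (D k has_vector_derivative D (Suc k) x) (at x)"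
    "\<forall>k m. \<exists>C. \<forall>t. norm (D k t) * (1 + \<bar>t\<bar>) ^ m \<le> C"
proof -
  obtain D where D: "D 0 = phi" "\<forall>k x. (D k has_vector_derivative D (Suc k) x) (at x)"
    and bound: "\<forall>k m. \<exists>C. \<forall>x. \<bar>x\<bar> ^ m * norm (D k x) \<le> C"
    using assms unfolding schwartz_def by blast
  have "\<exists>C. \<forall>t. norm (D k t) * (1 + \<bar>t\<bar>) ^ m \<le> C" for k m
  proof -
    obtain C0 Cm where C0: "\<forall>x. \<bar>x\<bar> ^ 0 * norm (D k x) \<le> C0"
      and Cm: "\<forall>x. \<bar>x\<bar> ^ m * norm (D k x) \<le> Cm"
      using bound by meson
    have "norm (D k t) * (1 + \<bar>t\<bar>) ^ m \<le> 2 ^ m * (C0 + Cm)" for t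
    proof -
      have "(1 + \<bar>t\<bar>) ^ m \<le> (2 * max 1 \<bar>t\<bar>) ^ m"
        by (intro power_mono) auto
      also have "\<dots> \<le> 2 ^ m * (1 + \<bar>t\<bar> ^ m)"
        by (auto simp: power_mult_distrib max_def)
      finally have "norm (D k t) * (1 + \<bar>t\<bar>) ^ m \<le> norm (D k t) * (2 ^ m * (1 + \<bar>t\<bar> ^ m))"
        by (intro mult_left_mono) auto
      also have "\<dots> = 2 ^ m * (norm (D k t) + \<bar>t\<bar> ^ m * norm (D k t))"
        by (simp add: algebra_simps)
      also have "\<dots> \<le> 2 ^ m * (C0 + Cm)"
        using C0 Cm by (intro mult_left_mono add_mono) auto
      finally show ?thesis .
    qed
    then show ?thesis by blast
  qed
  with D show ?thesis using that by blast
qed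

lemma schwartz_integrable:
  fixes D :: "nat \<Rightarrow> real \<Rightarrow> complex"
  assumes D0: "D 0 = phi" and dD: "\<forall>k x. (D k has_vector_derivative D (Suc k) x) (at x)"
    and bD: "\<forall>k m. \<exists>C. \<forall>t. norm (D k t) * (1 + \<bar>t\<bar>) ^ m \<le> C"
  shows "phi \<in> borel_measurable borel" "integrable lborel phi"
proof -
  show meas: "phi \<in> borel_measurable borel"
    using dD D0 has_vector_derivative_continuous
    by (metis borel_measurable_continuous_onI continuous_at_imp_continuous_on)
  obtain C where C: "\<forall>t. norm (phi t) * (1 + \<bar>t\<bar>) ^ 2 \<le> C"
    using bD D0 by metis
  show "integrable lborel phi"
  proof (rule Bochner_Integration.integrable_bound[of _ "\<lambda>t. C * inverse (1 + t\<^sup>2)"])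
    show "integrable lborel (\<lambda>t. C * inverse (1 + t\<^sup>2))"
      using integrable_inverse_1_plus_square by (simp add: set_integrable_def)
    have "norm (phi t) \<le> C * inverse (1 + t\<^sup>2)" for t
    proof -
      have "norm (phi t) * (1 + t\<^sup>2) \<le> norm (phi t) * (1 + \<bar>t\<bar>) ^ 2"
        by (intro mult_left_mono) (auto simp: power2_eq_square algebra_simps)
      with C show ?thesis by (simp add: field_simps add_pos_nonneg order_trans)
    qed
    then show "AE t in lborel. norm (phi t) \<le> norm (C * inverse (1 + t\<^sup>2))"
      by (auto intro: order_trans[OF _ abs_ge_self])
  qed (use meas in simp)
qed

lemma sin_pi_nonneg:
  assumes "2 * real n \<le> p" "p \<le> 2 * real n + 1"
  shows "0 \<le> sin (pi * p)"
proof -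
  have "sin (pi * p) = sin (2 * real n * pi + pi * (p - 2 * real n))"
    by (simp add: algebra_simps)
  also have "\<dots> = sin (pi * (p - 2 * real n))"
    by (simp add: sin_add)
  finally show ?thesis using assms by (simp add: sin_ge_zero)
qed

lemma norm_chirp_le_1:
  assumes "0 \<le> sin (pi * p)"
  shows "norm (chirp p y) \<le> 1"
proof -
  have "0 \<le> Im (cpow p y)"
    using assms unfolding cpow_def by (auto simp: Im_exp)
  then show ?thesis unfolding chirp_def by simp
qed

lemma chirp_measurable: "chirp p \<in> borel_measurable borel"
  unfolding chirp_def[abs_def] cpow_def by measurable

definition shifted_stft_integrand ::
    "(real \<Rightarrow> complex) \<Rightarrow> (real \<Rightarrow> complex) \<Rightarrow> real \<times> real \<Rightarrow> real \<Rightarrow> complex" where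
  "shifted_stft_integrand phi u z t = u (t + fst z) * cnj (phi t) * exp (- \<i> * of_real ((t + fst z) * snd z))"

lemma stft_shift: "stft phi u z = (LINT t|lborel. shifted_stft_integrand phi u z t)"
  unfolding stft_def shifted_stft_integrand_def
  using lborel_integral_real_affine[of 1
      "\<lambda>y. u y * cnj (phi (y - fst z)) * exp (- \<i> * of_real (y * snd z))" "fst z"]
  by (simp add: add.commute)

lemma norm_shifted_stft_integrand_chirp:
  assumes "0 \<le> sin (pi * p)"
  shows "norm (shifted_stft_integrand phi (chirp p) z t) \<le> norm (phi t)"
  using norm_chirp_le_1[OF assms, of "t + fst z"]
  by (simp add: shifted_stft_integrand_def norm_mult mult_left_le_one_le)

lemma integrable_shifted_stft_integrand_chirp:
  fixes phi :: "real \<Rightarrow> complex"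
  assumes "0 \<le> sin (pi * p)" and [measurable]: "phi \<in> borel_measurable borel"
    and "integrable lborel phi"
  shows "integrable lborel (shifted_stft_integrand phi (chirp p) z)"
proof (rule Bochner_Integration.integrable_bound[OF assms(3)])
  have [measurable]: "chirp p \<in> borel_measurable borel"
    by (rule chirp_measurable)
  have [measurable]: "(\<lambda>t. cnj (phi t)) \<in> borel_measurable borel"
    using measurable_compose[OF assms(2) borel_measurable_continuous_onI[OF continuous_on_cnj]]
    by (simp add: comp_def)
  have [measurable]: "(\<lambda>t. exp (- \<i> * of_real ((t + fst z) * snd z))) \<in> borel_measurable borel"
    by (intro borel_measurable_continuous_onI continuous_intros)
  show "shifted_stft_integrand phi (chirp p) z \<in> borel_measurable lborel"
    unfolding shifted_stft_integrand_def[abs_def] by measurable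
  show "AE t in lborel. norm (shifted_stft_integrand phi (chirp p) z t) \<le> norm (phi t)"
    using norm_shifted_stft_integrand_chirp[OF assms(1)] by auto
qed

lemma norm_stft_chirp_le:
  fixes phi :: "real \<Rightarrow> complex"
  assumes "0 \<le> sin (pi * p)" "phi \<in> borel_measurable borel" "integrable lborel phi"
  shows "norm (stft phi (chirp p) z) \<le> (LINT t|lborel. norm (phi t))"
  unfolding stft_shift
  using integrable_shifted_stft_integrand_chirp[OF assms] assms(3)
    norm_shifted_stft_integrand_chirp[OF assms(1)]
  by (intro order_trans[OF integral_norm_bound] integral_mono) auto

lemma lborel_integral_split_interval:
  fixes F :: "real \<Rightarrow> complex"
  assumes "integrable lborel F"
  shows "(LINT t|lborel. F t)
    = integral {a..b} F + (LINT t|lborel. indicator (- {a..b}) t *\<^sub>R F t)"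
proof -
  have "(LINT t|lborel. F t)
      = (LINT t|lborel. indicator {a..b} t *\<^sub>R F t) + (LINT t|lborel. indicator (- {a..b}) t *\<^sub>R F t)"
    by (subst Bochner_Integration.integral_add[symmetric])
      (auto intro!: Bochner_Integration.integral_cong integrable_mult_indicator assms
        split: split_indicator)
  moreover have "(LINT t|lborel. indicator {a..b} t *\<^sub>R F t) = integral {a..b} F"
    using set_borel_integral_eq_integral(2)[of "{a..b}" F] integrable_mult_indicator[OF _ assms]
    by (simp add: set_integrable_def set_lebesgue_integral_def)
  ultimately show ?thesis by simp
qed

lemma tail_integral_decay:
  fixes F phi :: "real \<Rightarrow> complex" and r :: real
  assumes "1 \<le> r" "integrable lborel F" "\<And>t. norm (F t) \<le> norm (phi t)"
    and phi_bound: "\<forall>t. norm (phi t) * (1 + \<bar>t\<bar>) ^ (N + 2) \<le> C"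
  shows "norm (LINT t|lborel. indicator (- {-r/2..r/2}) t *\<^sub>R F t) * r ^ N \<le> 2 ^ N * C * pi"
proof -
  have "norm (phi 0) \<le> C" using phi_bound[rule_format, of 0] by simp
  then have C0: "0 \<le> C" by (rule order_trans[OF norm_ge_zero])
  have tail: "norm (phi t) \<le> 2 ^ N * C / r ^ N * inverse (1 + t\<^sup>2)" if "r/2 \<le> \<bar>t\<bar>" for t
  proof -
    have "r ^ N = 2 ^ N * (r/2) ^ N" by (simp add: power_divide)
    also have "\<dots> \<le> 2 ^ N * (1 + \<bar>t\<bar>) ^ N"
      using that assms(1) by (intro mult_left_mono power_mono) auto
    finally have "norm (phi t) * r ^ N * (1 + t\<^sup>2) \<le> norm (phi t) * (2 ^ N * (1 + \<bar>t\<bar>) ^ N) * (1 + \<bar>t\<bar>)\<^sup>2"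
      by (intro mult_mono mult_left_mono) (auto simp: power2_eq_square algebra_simps)
    also have "\<dots> = 2 ^ N * (norm (phi t) * (1 + \<bar>t\<bar>) ^ (N + 2))"
      by (simp add: power_add power2_eq_square mult_ac)
    also have "\<dots> \<le> 2 ^ N * C"
      using phi_bound by (intro mult_left_mono) auto
    finally show ?thesis
      using assms(1) by (simp add: field_simps add_pos_nonneg)
  qed
  have "norm (LINT t|lborel. indicator (- {-r/2..r/2}) t *\<^sub>R F t)
      \<le> (LINT t|lborel. norm (indicator (- {-r/2..r/2}) t *\<^sub>R F t))"
    by (rule integral_norm_bound)
  also have "\<dots> \<le> (LINT t|lborel. 2 ^ N * C / r ^ N * inverse (1 + t\<^sup>2))"
  proof (rule integral_mono)
    show "integrable lborel (\<lambda>t. norm (indicator (- {-r/2..r/2}) t *\<^sub>R F t))"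
      using assms(2) by (intro integrable_norm integrable_mult_indicator) auto
    show "integrable lborel (\<lambda>t. 2 ^ N * C / r ^ N * inverse (1 + t\<^sup>2))"
      using integrable_inverse_1_plus_square by (simp add: set_integrable_def)
    show "norm (indicator (- {-r/2..r/2}) t *\<^sub>R F t) \<le> 2 ^ N * C / r ^ N * inverse (1 + t\<^sup>2)" for t
      using tail[of t] assms(3)[of t] C0 assms(1) by (auto split: split_indicator intro: order_trans)
  qed
  also have "\<dots> = 2 ^ N * C / r ^ N * pi"
    using LBINT_inverse_1_plus_square
    by (simp add: interval_lebesgue_integral_def set_lebesgue_integral_def)
  finally show ?thesis using assms(1) by (simp add: field_simps)
qed

context chirp_sector
begin

lemma stft_chirp_sector_split:
  assumes w: "w \<in> sector" and "phi \<in> borel_measurable borel" "integrable lborel phi"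
  shows "stft phi (chirp p) w = integral {-\<bar>fst w\<bar>/2..\<bar>fst w\<bar>/2} (\<lambda>t. wave w t * cnj (phi t))
    + (LINT t|lborel. indicator (- {-\<bar>fst w\<bar>/2..\<bar>fst w\<bar>/2}) t *\<^sub>R shifted_stft_integrand phi (chirp p) w t)"
proof -
  have "integral {-\<bar>fst w\<bar>/2..\<bar>fst w\<bar>/2} (shifted_stft_integrand phi (chirp p) w)
      = integral {-\<bar>fst w\<bar>/2..\<bar>fst w\<bar>/2} (\<lambda>t. wave w t * cnj (phi t))"
  proof (rule integral_cong)
    fix t assume "t \<in> {-\<bar>fst w\<bar>/2..\<bar>fst w\<bar>/2}"
    then have "0 < yabs w t"
      using sector_scale_ge_1 w by (intro yabs_lower[OF w]) auto
    then have "chirp p (t + fst w) = exp (\<i> * (\<gamma> * of_real (yabs w t powr p)))"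
      using chirp_eq unfolding yabs_def by auto
    then show "shifted_stft_integrand phi (chirp p) w t = wave w t * cnj (phi t)"
      unfolding shifted_stft_integrand_def wave_def by (simp add: exp_add[symmetric] algebra_simps)
  qed
  then show ?thesis
    unfolding stft_shift
      lborel_integral_split_interval[OF integrable_shifted_stft_integrand_chirp[OF sin_nonneg assms(2,3)],
        where a = "-\<bar>fst w\<bar>/2" and b = "\<bar>fst w\<bar>/2"]
    by simp
qed

lemma stft_chirp_sector_decay:
  assumes "schwartz phi"
  shows "\<exists>C. \<forall>w\<in>sector. norm (stft phi (chirp p) w) * \<bar>fst w\<bar> ^ N \<le> C"
proof -
  obtain D where D0: "D 0 = phi" and dD: "\<forall>k x. (D k has_vector_derivative D (Suc k) x) (at x)"
    and bD: "\<forall>k m. \<exists>C. \<forall>t. norm (D k t) * (1 + \<bar>t\<bar>) ^ m \<le> C"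
    using schwartz_derivatives[OF assms] by blast
  note phi = schwartz_integrable[OF D0 dD bD]
  obtain C1 where C1: "\<forall>w\<in>sector. norm (integral {-\<bar>fst w\<bar>/2..\<bar>fst w\<bar>/2} (\<lambda>t. wave w t * cnj (phi t)))
      * \<bar>fst w\<bar> ^ Suc N \<le> C1 * \<bar>fst w\<bar>"
    using wave_integral_decay[OF dD bD] D0 by blast
  obtain C2 where C2: "\<forall>t. norm (phi t) * (1 + \<bar>t\<bar>) ^ (N + 2) \<le> C2"
    using bD D0 by metis
  have "norm (stft phi (chirp p) w) * \<bar>fst w\<bar> ^ N \<le> C1 + 2 ^ N * C2 * pi" if w: "w \<in> sector" for w
  proof -
    define r where "r = \<bar>fst w\<bar>"
    have r1: "1 \<le> r" using sector_scale_ge_1 w r_def by auto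
    have "norm (integral {-r/2..r/2} (\<lambda>t. wave w t * cnj (phi t))) * r ^ N * r \<le> C1 * r"
      using C1 w unfolding r_def by (auto simp: mult_ac)
    then have inner: "norm (integral {-r/2..r/2} (\<lambda>t. wave w t * cnj (phi t))) * r ^ N \<le> C1"
      using r1 by simp
    have outer: "norm (LINT t|lborel. indicator (- {-r/2..r/2}) t *\<^sub>R shifted_stft_integrand phi (chirp p) w t)
        * r ^ N \<le> 2 ^ N * C2 * pi"
      using r1 integrable_shifted_stft_integrand_chirp[OF sin_nonneg phi]
        norm_shifted_stft_integrand_chirp[OF sin_nonneg] C2
      by (intro tail_integral_decay) auto
    have "norm (stft phi (chirp p) w) * r ^ N
        \<le> norm (integral {-r/2..r/2} (\<lambda>t. wave w t * cnj (phi t))) * r ^ N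
          + norm (LINT t|lborel. indicator (- {-r/2..r/2}) t *\<^sub>R shifted_stft_integrand phi (chirp p) w t) * r ^ N"
      unfolding stft_chirp_sector_split[OF w phi] r_def distrib_right[symmetric]
      by (intro mult_right_mono norm_triangle_ineq) auto
    with inner outer show ?thesis unfolding r_def by simp
  qed
  then show ?thesis by fastforce
qed

end

definition open_sector :: "real \<Rightarrow> real \<Rightarrow> (real \<times> real) set" where
  "open_sector s A = {z. 0 < s * fst z \<and> \<bar>snd z\<bar> < A * (s * fst z)}"

lemma open_conic_open_sector: "open_conic (open_sector s A)"
proof -
  have "open (open_sector s A)"
    unfolding open_sector_def Collect_conj_eq by (intro open_Int open_Collect_less continuous_intros)
  moreover have "t *\<^sub>R z \<in> open_sector s A" if "z \<in> open_sector s A" "0 < t" for z t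
  proof -
    have "0 < t * (s * fst z)" "t * \<bar>snd z\<bar> < t * (A * (s * fst z))"
      using that by (auto simp: open_sector_def)
    then show ?thesis
      using that(2) by (simp add: open_sector_def abs_mult mult_ac)
  qed
  ultimately show ?thesis
    unfolding open_conic_def open_sector_def by auto
qed

lemma chirp_threshold_exists:
  fixes p A :: real
  assumes "2 < p" "0 \<le> A"
  shows "\<exists>R\<ge>4. A + 1 \<le> p * (R/4) powr (p - 2) / 4"
proof (intro exI conjI)
  define K where "K = (4 * (A + 1) / p) powr (1 / (p - 2))"
  have "4 * (A + 1) / p = K powr (p - 2)"
    unfolding K_def using assms by (simp add: powr_powr)
  also have "\<dots> \<le> (4 * max 1 K / 4) powr (p - 2)"
    using assms unfolding K_def by (intro powr_mono2) auto
  finally show "A + 1 \<le> p * (4 * max 1 K / 4) powr (p - 2) / 4"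
    using assms by (simp add: field_simps)
qed simp

lemma jbr_powr_le_linear:
  assumes "1 \<le> \<bar>x\<bar>" "\<bar>xi\<bar> \<le> A * \<bar>x\<bar>" "0 \<le> A" "0 \<le> N"
  shows "jbr (x, xi) powr N \<le> (2 + A) ^ nat \<lceil>N\<rceil> * \<bar>x\<bar> ^ nat \<lceil>N\<rceil>"
proof -
  have "xi\<^sup>2 \<le> (A * \<bar>x\<bar>)\<^sup>2"
    using power_mono[OF assms(2) abs_ge_zero, of 2] by simp
  moreover have "1 \<le> x\<^sup>2"
    using power_mono[OF assms(1) zero_le_one, of 2] by simp
  moreover have "0 \<le> A * x\<^sup>2" using assms(3) by simp
  ultimately have "1 + (x\<^sup>2 + xi\<^sup>2) \<le> ((2 + A) * \<bar>x\<bar>)\<^sup>2"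
    by (simp add: power2_eq_square algebra_simps)
  from real_sqrt_le_mono[OF this] have jbr: "jbr (x, xi) \<le> (2 + A) * \<bar>x\<bar>"
    using assms(3) unfolding jbr_def norm_Pair by (simp add: add.assoc)
  have "1 \<le> jbr (x, xi)" unfolding jbr_def by simp
  then have "jbr (x, xi) powr N \<le> jbr (x, xi) ^ nat \<lceil>N\<rceil>"
    using powr_mono[of N "real (nat \<lceil>N\<rceil>)" "jbr (x, xi)"] real_nat_ceiling_ge[of N]
    by (simp add: powr_realpow)
  also have "\<dots> \<le> ((2 + A) * \<bar>x\<bar>) ^ nat \<lceil>N\<rceil>"
    using jbr by (intro power_mono) (auto simp: jbr_def)
  finally show ?thesis by (simp add: power_mult_distrib)
qed

lemma jbr_le_open_sector_bounded:
  assumes "(x, xi) \<in> open_sector s A" "s = 1 \<or> s = -1" "0 \<le> A" "s * x < R"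
  shows "jbr (x, xi) \<le> sqrt (1 + R\<^sup>2 + (A * R)\<^sup>2)"
proof -
  have "0 < s * x" "\<bar>xi\<bar> < A * (s * x)"
    using assms(1) by (auto simp: open_sector_def)
  moreover have "A * (s * x) \<le> A * R"
    using assms(3,4) by (intro mult_left_mono) auto
  ultimately have "\<bar>x\<bar> \<le> R" "\<bar>xi\<bar> \<le> A * R"
    using assms(2,4) by auto
  then have "x\<^sup>2 \<le> R\<^sup>2" "xi\<^sup>2 \<le> (A * R)\<^sup>2"
    using power_mono[OF _ abs_ge_zero, of _ _ 2] by (metis power2_abs)+
  then show ?thesis
    unfolding jbr_def norm_Pair by (simp add: add.assoc)
qed

lemma stft_chirp_decay_open_sector:
  assumes "2 < p" "0 \<le> sin (pi * p)" "schwartz phi" "s = 1 \<or> s = -1" "0 \<le> A" "0 \<le> N"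
  shows "\<exists>C. \<forall>z\<in>open_sector s A. jbr z powr N * norm (stft phi (chirp p) z) \<le> C"
proof -
  obtain R where "4 \<le> R" "A + 1 \<le> p * (R/4) powr (p - 2) / 4"
    using chirp_threshold_exists assms(1,5) by blast
  then interpret chirp_sector p s A R
    using assms by unfold_locales auto
  define M where "M = nat \<lceil>N\<rceil>"
  obtain C where C: "\<forall>w\<in>sector. norm (stft phi (chirp p) w) * \<bar>fst w\<bar> ^ M \<le> C"
    using stft_chirp_sector_decay[OF assms(3)] by blast
  obtain D where "D 0 = phi" "\<forall>k x. (D k has_vector_derivative D (Suc k) x) (at x)"
    "\<forall>k m. \<exists>C. \<forall>t. norm (D k t) * (1 + \<bar>t\<bar>) ^ m \<le> C"
    using schwartz_derivatives[OF assms(3)] by blast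
  note K = norm_stft_chirp_le[OF sin_nonneg schwartz_integrable[OF this]]
  have "jbr (x, xi) powr N * norm (stft phi (chirp p) (x, xi))
      \<le> max ((2 + A) ^ M * C) (sqrt (1 + R\<^sup>2 + (A * R)\<^sup>2) powr N * (LINT t|lborel. norm (phi t)))"
    if z: "(x, xi) \<in> open_sector s A" for x xi
  proof (cases "R \<le> s * x")
    case True
    then have w: "(x, xi) \<in> sector" and x: "s * x = \<bar>x\<bar>" "1 \<le> \<bar>x\<bar>"
      using z s R4 by (auto simp: sector_def open_sector_def)
    have "jbr (x, xi) powr N * norm (stft phi (chirp p) (x, xi))
        \<le> (2 + A) ^ M * \<bar>x\<bar> ^ M * norm (stft phi (chirp p) (x, xi))"
      using jbr_powr_le_linear[of x xi A N] z x A0 assms(6) unfolding M_def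
      by (intro mult_right_mono) (auto simp: open_sector_def)
    also have "\<dots> = (2 + A) ^ M * (norm (stft phi (chirp p) (x, xi)) * \<bar>x\<bar> ^ M)"
      by (simp add: mult_ac)
    also have "\<dots> \<le> (2 + A) ^ M * C"
      using bspec[OF C w] A0 by (intro mult_left_mono) auto
    finally show ?thesis by simp
  next
    case False
    then have "jbr (x, xi) powr N \<le> sqrt (1 + R\<^sup>2 + (A * R)\<^sup>2) powr N"
      using assms(6) jbr_le_open_sector_bounded[OF z s A0] by (intro powr_mono2) (auto simp: jbr_def)
    then have "jbr (x, xi) powr N * norm (stft phi (chirp p) (x, xi))
        \<le> sqrt (1 + R\<^sup>2 + (A * R)\<^sup>2) powr N * (LINT t|lborel. norm (phi t))"
      using K by (intro mult_mono) auto
    then show ?thesis by simp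
  qed
  then show ?thesis by fastforce
qed

lemma gabor_WF_chirp_fst_eq_0:
  assumes "2 < p" "0 \<le> sin (pi * p)" "schwartz phi" "(x, xi) \<in> gabor_WF phi (chirp p)"
  shows "x = 0"
proof (rule ccontr)
  assume "x \<noteq> 0"
  define s where "s = sgn x"
  define A where "A = \<bar>xi\<bar> / \<bar>x\<bar> + 1"
  have sector_params: "s = 1 \<or> s = -1" "0 \<le> A"
    using \<open>x \<noteq> 0\<close> by (auto simp: s_def A_def sgn_if)
  have "s * x = \<bar>x\<bar>"
    by (simp add: s_def sgn_if)
  moreover have "\<bar>xi\<bar> < A * \<bar>x\<bar>"
    using \<open>x \<noteq> 0\<close> by (simp add: A_def distrib_right)
  ultimately have "(x, xi) \<in> open_sector s A"
    using \<open>x \<noteq> 0\<close> by (simp add: open_sector_def)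
  then show False
    using assms(4) stft_chirp_decay_open_sector[OF assms(1-3) sector_params] open_conic_open_sector
    unfolding gabor_WF_def by blast
qed

theorem proposition8p2:
  fixes p :: real and n :: nat and phi :: "real \<Rightarrow> complex"
  assumes "p > 2" and "2 * real n \<le> p" and "p \<le> 2 * real n + 1"
    and "schwartz phi" and "phi \<noteq> (\<lambda>_. 0)"
  shows "gabor_WF phi (chirp p) \<subseteq> {(x, xi). x = 0 \<and> xi \<noteq> 0}"
proof
  fix z assume z: "z \<in> gabor_WF phi (chirp p)"
  obtain x xi where z_eq: "z = (x, xi)" by fastforce
  have "x = 0"
    using z gabor_WF_chirp_fst_eq_0[OF assms(1) sin_pi_nonneg[OF assms(2,3)] assms(4)]
    unfolding z_eq by blast
  with z show "z \<in> {(x, xi). x = 0 \<and> xi \<noteq> 0}"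
    by (auto simp: z_eq gabor_WF_def zero_prod_def)
qed

end
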